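(* Let $A$ be a finite skew brace, $k$ a field, $I$ an ideal of $A$, and $(V,\beta,\rho)$ an irreducible representation of $A$ over $k$. Then the restriction $(V,\beta|_I,\rho|_I)$, a representation of the skew brace $I$, is completely reducible. Write $V=W_1\oplus\cdots\oplus W_r$, where $S_1,\dots,S_r$ are pairwise non-equivalent irreducible representations of $I$ and $W_i$ (the homogeneous component of type $S_i$) is the sum of all irreducible $I$-subrepresentations of $V$ equivalent to $S_i$, with $W_i\cong S_i^{\oplus m_i}$. Then: (a) for each $g\in\Lambda_A$, $\varphi_{(\beta,\rho)}(g)$ maps each $W_i$ onto some $W_j$, and the resulting action of $\Lambda_A$ on $\{W_1,\dots,W_r\}$ is transitive; (b) $m_1=\cdots=m_r$ and $\dim_k S_1=\cdots=\dim_k S_r$.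
   Context: A skew brace is a set $A$ with two group operations $\cdot$ and $\circ$ such that $a\circ(b\cdot c)=(a\circ b)\cdot a^{-1}\cdot(a\circ c)$ for all $a,b,c\in A$; here $a^{-1}$ is the inverse in $(A,\cdot)$. For $a\in A$ let $\lambda_a(b)=a^{-1}\cdot(a\circ b)$ and $\lambda^{\mathrm{op}}_a(b)=(a\circ b)\cdot a^{-1}$. Let $\Lambda_A$ be the group on $A\times A$ with multiplication $(a,b)(c,d)=(a\cdot\lambda^{\mathrm{op}}_b(c),\,b\circ d)$. A representation of $A$ over $k$ is a triple $(V,\beta,\rho)$ with $V$ a $k$-vector space, $\beta:(A,\cdot)\to\mathrm{GL}(V)$, $\rho:(A,\circ)\to\mathrm{GL}(V)$ group homomorphisms such that $\beta(\lambda^{\mathrm{op}}_a(b))=\rho(a)\beta(b)\rho(a)^{-1}$ for all $a,b\in A$; it gives $\varphi_{(\beta,\rho)}:\Lambda_A\to\mathrm{GL}(V)$, $(a,b)\mapsto\beta(a)\rho(b)$. A subrepresentation is a subspace invariant under all $\beta(a),\rho(b)$; irreducible means $V\neq0$ with no subrepresentations other than $0,V$; completely reducible means a direct sum of irreducible subrepresentations. Two representations $(V_1,\beta_1,\rho_1),(V_2,\beta_2,\rho_2)$ are equivalent if there is a linear isomorphism $T:V_1\to V_2$ with $T\beta_1(a)=\beta_2(a)T$ and $T\rho_1(a)=\rho_2(a)T$ for all $a$. An ideal of $A$ is a subset $I$ that is a normal subgroup of both $(A,\cdot)$ and $(A,\circ)$ with $\lambda_a(I)\subseteq I$ for all $a\in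 A$; then $(I,\cdot,\circ)$ is a skew brace. *)

theory Defs
  imports Complex_Main "HOL-Algebra.Coset"
begin

definition skew_brace :: "'a monoid \<Rightarrow> 'a monoid \<Rightarrow> bool" where
  "skew_brace G C \<longleftrightarrow> group G \<and> group C \<and> carrier C = carrier G \<and>
     (\<forall>a\<in>carrier G. \<forall>b\<in>carrier G. \<forall>c\<in>carrier G.
        a \<otimes>\<^bsub>C\<^esub> (b \<otimes>\<^bsub>G\<^esub> c)
        = (a \<otimes>\<^bsub>C\<^esub> b) \<otimes>\<^bsub>G\<^esub> inv\<^bsub>G\<^esub> a \<otimes>\<^bsub>G\<^esub> (a \<otimes>\<^bsub>C\<^esub> c))"

definition brace_lambda :: "'a monoid \<Rightarrow> 'a monoid \<Rightarrow> 'a \<Rightarrow> 'a \<Rightarrow> 'a" where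
  "brace_lambda G C a b = inv\<^bsub>G\<^esub> a \<otimes>\<^bsub>G\<^esub> (a \<otimes>\<^bsub>C\<^esub> b)"

definition brace_lambda_op :: "'a monoid \<Rightarrow> 'a monoid \<Rightarrow> 'a \<Rightarrow> 'a \<Rightarrow> 'a" where
  "brace_lambda_op G C a b = (a \<otimes>\<^bsub>C\<^esub> b) \<otimes>\<^bsub>G\<^esub> inv\<^bsub>G\<^esub> a"

definition Lambda_group :: "'a monoid \<Rightarrow> 'a monoid \<Rightarrow> ('a \<times> 'a) monoid" where
  "Lambda_group G C = \<lparr> carrier = carrier G \<times> carrier G,
     mult = (\<lambda>(a,b) (c,d). (a \<otimes>\<^bsub>G\<^esub> brace_lambda_op G C b c, b \<otimes>\<^bsub>C\<^esub> d)),
     one = (\<one>\<^bsub>G\<^esub>, \<one>\<^bsub>C\<^esub>) \<rparr>"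

definition brace_ideal :: "'a monoid \<Rightarrow> 'a monoid \<Rightarrow> 'a set \<Rightarrow> bool" where
  "brace_ideal G C I \<longleftrightarrow> normal I G \<and> normal I C \<and>
     (\<forall>a\<in>carrier G. brace_lambda G C a ` I \<subseteq> I)"

text \<open>Representations on the k-vector space given by the whole type 'v with scalar
  multiplication scale.  beta, rho map into GL(V) (linear bijections).\<close>

definition brace_rep :: "'a monoid \<Rightarrow> 'a monoid \<Rightarrow> ('k::field \<Rightarrow> 'v::ab_group_add \<Rightarrow> 'v)
    \<Rightarrow> ('a \<Rightarrow> 'v \<Rightarrow> 'v) \<Rightarrow> ('a \<Rightarrow> 'v \<Rightarrow> 'v) \<Rightarrow> bool" where
  "brace_rep G C scale \<beta> \<rho> \<longleftrightarrow>
     (\<forall>a\<in>carrier G. Vector_Spaces.linear scale scale (\<beta> a) \<and> bij (\<beta> a) \<and>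
                    Vector_Spaces.linear scale scale (\<rho> a) \<and> bij (\<rho> a)) \<and>
     (\<forall>a\<in>carrier G. \<forall>b\<in>carrier G.
        \<beta> (a \<otimes>\<^bsub>G\<^esub> b) = \<beta> a \<circ> \<beta> b \<and>
        \<rho> (a \<otimes>\<^bsub>C\<^esub> b) = \<rho> a \<circ> \<rho> b \<and>
        \<beta> (brace_lambda_op G C a b) = \<rho> a \<circ> \<beta> b \<circ> inv_into UNIV (\<rho> a))"

definition rep_phi :: "('a \<Rightarrow> 'v \<Rightarrow> 'v) \<Rightarrow> ('a \<Rightarrow> 'v \<Rightarrow> 'v) \<Rightarrow> 'a \<times> 'a \<Rightarrow> 'v \<Rightarrow> 'v" where
  "rep_phi \<beta> \<rho> g = \<beta> (fst g) \<circ> \<rho> (snd g)"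

definition inv_subspace :: "('k::field \<Rightarrow> 'v::ab_group_add \<Rightarrow> 'v) \<Rightarrow> 'a set
    \<Rightarrow> ('a \<Rightarrow> 'v \<Rightarrow> 'v) \<Rightarrow> ('a \<Rightarrow> 'v \<Rightarrow> 'v) \<Rightarrow> 'v set \<Rightarrow> bool" where
  "inv_subspace scale X \<beta> \<rho> W \<longleftrightarrow> module.subspace scale W \<and>
     (\<forall>a\<in>X. \<beta> a ` W \<subseteq> W \<and> \<rho> a ` W \<subseteq> W)"

definition irred_sub :: "('k::field \<Rightarrow> 'v::ab_group_add \<Rightarrow> 'v) \<Rightarrow> 'a set
    \<Rightarrow> ('a \<Rightarrow> 'v \<Rightarrow> 'v) \<Rightarrow> ('a \<Rightarrow> 'v \<Rightarrow> 'v) \<Rightarrow> 'v set \<Rightarrow> bool" where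
  "irred_sub scale X \<beta> \<rho> W \<longleftrightarrow> inv_subspace scale X \<beta> \<rho> W \<and> W \<noteq> {0} \<and>
     (\<forall>U. inv_subspace scale X \<beta> \<rho> U \<and> U \<subseteq> W \<longrightarrow> U = {0} \<or> U = W)"

definition equiv_sub :: "('k::field \<Rightarrow> 'v::ab_group_add \<Rightarrow> 'v) \<Rightarrow> 'a set
    \<Rightarrow> ('a \<Rightarrow> 'v \<Rightarrow> 'v) \<Rightarrow> ('a \<Rightarrow> 'v \<Rightarrow> 'v) \<Rightarrow> 'v set \<Rightarrow> 'v set \<Rightarrow> bool" where
  "equiv_sub scale X \<beta> \<rho> W1 W2 \<longleftrightarrow> (\<exists>T.
     (\<forall>x\<in>W1. \<forall>y\<in>W1. T (x + y) = T x + T y) \<and>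
     (\<forall>c. \<forall>x\<in>W1. T (scale c x) = scale c (T x)) \<and>
     bij_betw T W1 W2 \<and>
     (\<forall>a\<in>X. \<forall>w\<in>W1. T (\<beta> a w) = \<beta> a (T w) \<and> T (\<rho> a w) = \<rho> a (T w)))"

definition direct_sum :: "('k::field \<Rightarrow> 'v::ab_group_add \<Rightarrow> 'v) \<Rightarrow> (nat \<Rightarrow> 'v set) \<Rightarrow> nat
    \<Rightarrow> 'v set \<Rightarrow> bool" where
  "direct_sum scale U n W \<longleftrightarrow> (\<forall>j<n. module.subspace scale (U j)) \<and>
     (\<forall>u. (\<forall>j<n. u j \<in> U j) \<and> (\<Sum>j<n. u j) = 0 \<longrightarrow> (\<forall>j<n. u j = 0)) \<and>
     W = {(\<Sum>j<n. u j) | u. \<forall>j<n. u j \<in> U j}"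

definition completely_reducible :: "('k::field \<Rightarrow> 'v::ab_group_add \<Rightarrow> 'v) \<Rightarrow> 'a set
    \<Rightarrow> ('a \<Rightarrow> 'v \<Rightarrow> 'v) \<Rightarrow> ('a \<Rightarrow> 'v \<Rightarrow> 'v) \<Rightarrow> bool" where
  "completely_reducible scale X \<beta> \<rho> \<longleftrightarrow>
     (\<exists>n U. (\<forall>j<n. irred_sub scale X \<beta> \<rho> (U j)) \<and> direct_sum scale U n UNIV)"

definition homog_comp :: "('k::field \<Rightarrow> 'v::ab_group_add \<Rightarrow> 'v) \<Rightarrow> 'a set
    \<Rightarrow> ('a \<Rightarrow> 'v \<Rightarrow> 'v) \<Rightarrow> ('a \<Rightarrow> 'v \<Rightarrow> 'v) \<Rightarrow> 'v set \<Rightarrow> 'v set" where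
  "homog_comp scale X \<beta> \<rho> S = module.span scale
     (\<Union>{W. irred_sub scale X \<beta> \<rho> W \<and> equiv_sub scale X \<beta> \<rho> W S})"

end

theory Submission
  imports Defs
begin

text \<open>
  This is Clifford's theorem for the group \<open>\<Lambda>\<^sub>A\<close> acting on \<open>V\<close> through
  \<open>\<phi>(a,b) = \<beta>(a)\<rho>(b)\<close> and the operators \<open>N = \<beta>(I) \<union> \<rho>(I)\<close>.  Because \<open>I\<close> is an ideal,
  \<open>\<phi>(g)\<^sup>-\<^sup>1 x \<phi>(g)\<close> is a product of elements of \<open>N\<close> for every \<open>x\<close> in \<open>N\<close>, so each \<open>\<phi>(g)\<close>
  permutes the irreducible \<open>N\<close>-subspaces of \<open>V\<close> and respects their equivalence.
  For one irreducible \<open>S\<close>, the span of the translates \<open>\<phi>(g) S\<close> is \<open>\<Lambda>\<^sub>A\<close>-invariant,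
  hence all of \<open>V\<close>, and a maximal independent family of translates decomposes \<open>V\<close> into
  irreducibles.  By Schur's lemma applied to the projections onto the summands, every
  irreducible is equivalent to some translate \<open>k S\<close>, so its homogeneous component is
  the image under \<open>k\<close> of that of \<open>S\<close>.  Transitivity, equality of dimensions and
  equality of multiplicities all follow by transporting along such \<open>k\<close>.  No
  finite-dimensionality is assumed: \<open>V\<close> is spanned by the finite orbit of any
  nonzero vector.
\<close>

section \<open>Maps linear on a subspace\<close>

text \<open>Equivalences in the sense of \<open>equiv_sub\<close> are only linear on their domain.\<close>
definition linear_on :: "('k \<Rightarrow> 'v::plus \<Rightarrow> 'v) \<Rightarrow> 'v set \<Rightarrow> ('v \<Rightarrow> 'v) \<Rightarrow> bool" where
  "linear_on scale W T \<longleftrightarrow>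
     (\<forall>x\<in>W. \<forall>y\<in>W. T (x + y) = T x + T y) \<and> (\<forall>c. \<forall>x\<in>W. T (scale c x) = scale c (T x))"

context vector_space
begin

lemma linear_imp_linear_on: "Vector_Spaces.linear scale scale f \<Longrightarrow> linear_on scale W f"
  unfolding linear_on_def Vector_Spaces.linear_iff by blast

lemma linear_on_subset: "linear_on scale W T \<Longrightarrow> W' \<subseteq> W \<Longrightarrow> linear_on scale W' T"
  unfolding linear_on_def by blast

lemma linear_on_comp:
  "linear_on scale W T \<Longrightarrow> T ` W \<subseteq> W' \<Longrightarrow> linear_on scale W' T' \<Longrightarrow> linear_on scale W (T' \<circ> T)"
  unfolding linear_on_def by (simp add: image_subset_iff)

lemma linear_on_0: "subspace W \<Longrightarrow> linear_on scale W T \<Longrightarrow> T 0 = 0"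
  unfolding linear_on_def by (metis add_cancel_right_right subspace_0)

lemma subspace_linear_on_image:
  assumes W: "subspace W" and T: "linear_on scale W T"
  shows "subspace (T ` W)"
  unfolding subspace_def
proof (intro conjI ballI allI)
  show "0 \<in> T ` W" using linear_on_0[OF W T] subspace_0[OF W] by force
  show "x + y \<in> T ` W" if x: "x \<in> T ` W" and y: "y \<in> T ` W" for x y
  proof -
    obtain a b where "a \<in> W" "b \<in> W" "x = T a" "y = T b" using x y by blast
    then show ?thesis using T subspace_add[OF W] unfolding linear_on_def by (metis image_eqI)
  qed
  show "c *s x \<in> T ` W" if x: "x \<in> T ` W" for c x
  proof -
    obtain a where "a \<in> W" "x = T a" using x by blast
    then show ?thesis using T subspace_scale[OF W] unfolding linear_on_def by (metis image_eqI)
  qed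
qed

lemma subspace_linear_on_kernel:
  assumes W: "subspace W" and T: "linear_on scale W T"
  shows "subspace {w\<in>W. T w = 0}"
  using W T linear_on_0[OF W T] unfolding subspace_def linear_on_def by auto

lemma linear_on_inj_onI:
  assumes W: "subspace W" and T: "linear_on scale W T" and ker: "\<And>w. w \<in> W \<Longrightarrow> T w = 0 \<Longrightarrow> w = 0"
  shows "inj_on T W"
proof (rule inj_onI)
  fix x y assume xy: "x \<in> W" "y \<in> W" "T x = T y"
  have "T (x - y) + T y = T x"
    using T xy(1,2) subspace_diff[OF W] unfolding linear_on_def by (metis diff_add_cancel)
  then show "x = y" using ker[of "x - y"] subspace_diff[OF W xy(1,2)] xy(3) by simp
qed

lemma linear_on_inv_into:
  assumes W: "subspace W" and T: "linear_on scale W T" and bij: "bij_betw T W W'"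
  shows "linear_on scale W' (inv_into W T)"
proof -
  have inv: "inv_into W T x \<in> W" "T (inv_into W T x) = x" if "x \<in> W'" for x
    using that bij by (auto simp: bij_betw_def inv_into_into f_inv_into_f)
  have inv_back: "inv_into W T (T w) = w" if "w \<in> W" for w
    using that bij by (simp add: bij_betw_def)
  show ?thesis
    unfolding linear_on_def
  proof (intro conjI ballI allI)
    fix x y assume "x \<in> W'" "y \<in> W'"
    then show "inv_into W T (x + y) = inv_into W T x + inv_into W T y"
      using inv inv_back[of "inv_into W T x + inv_into W T y"] T W
      unfolding linear_on_def by (metis subspace_add)
  next
    fix c x assume "x \<in> W'"
    then show "inv_into W T (c *s x) = c *s inv_into W T x"
      using inv inv_back[of "c *s inv_into W T x"] T W
      unfolding linear_on_def by (metis subspace_scale)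
  qed
qed

end

context finite_dimensional_vector_space
begin

lemma dim_linear_on_image_le:
  assumes W: "subspace W" and T: "linear_on scale W T"
  shows "dim (T ` W) \<le> dim W"
proof -
  obtain B where B: "B \<subseteq> W" "independent B" "W \<subseteq> span B" "card B = dim W"
    using basis_exists[of W] by metis
  have "subspace {x\<in>W. T x \<in> span (T ` B)}"
    using W T linear_on_0[OF W T] unfolding subspace_def linear_on_def
    by (auto intro: span_add span_scale span_zero)
  moreover have "B \<subseteq> {x\<in>W. T x \<in> span (T ` B)}" using B(1) by (auto intro: span_base)
  ultimately have "T ` W \<subseteq> span (T ` B)"
    using B(3) span_minimal by blast
  then have "dim (T ` W) \<le> card (T ` B)"
    using finiteI_independent[OF B(2)] by (simp add: dim_le_card)
  also have "\<dots> \<le> dim W"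
    using card_image_le[OF finiteI_independent[OF B(2)]] B(4) by simp
  finally show ?thesis .
qed

lemma dim_eq_of_bij_betw:
  assumes W: "subspace W" and T: "linear_on scale W T" and bij: "bij_betw T W W'"
  shows "dim W' = dim W"
proof -
  have "T ` W = W'" "inv_into W T ` W' = W"
    using bij bij_betw_inv_into[OF bij] by (auto simp: bij_betw_def)
  moreover have "subspace W'" using subspace_linear_on_image[OF W T] \<open>T ` W = W'\<close> by simp
  ultimately show ?thesis
    using dim_linear_on_image_le[OF W T] linear_on_inv_into[OF W T bij]
      dim_linear_on_image_le[of W' "inv_into W T"] by fastforce
qed

end

section \<open>Finite internal direct sums\<close>

definition sum_space :: "('i \<Rightarrow> 'v::comm_monoid_add set) \<Rightarrow> 'i set \<Rightarrow> 'v set" where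
  "sum_space U J = {\<Sum>j\<in>J. u j | u. \<forall>j\<in>J. u j \<in> U j}"

lemma sum_space_memI: "\<forall>j\<in>J. u j \<in> U j \<Longrightarrow> (\<Sum>j\<in>J. u j) \<in> sum_space U J"
  unfolding sum_space_def by blast

definition independent_family :: "('i \<Rightarrow> 'v::comm_monoid_add set) \<Rightarrow> 'i set \<Rightarrow> bool" where
  "independent_family U J \<longleftrightarrow> (\<forall>u. (\<forall>j\<in>J. u j \<in> U j) \<and> (\<Sum>j\<in>J. u j) = 0 \<longrightarrow> (\<forall>j\<in>J. u j = 0))"

lemma independent_familyD:
  "independent_family U J \<Longrightarrow> \<forall>j\<in>J. u j \<in> U j \<Longrightarrow> (\<Sum>j\<in>J. u j) = 0 \<Longrightarrow> j \<in> J \<Longrightarrow> u j = 0"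
  unfolding independent_family_def by blast

text \<open>Only meaningful for \<open>v \<in> sum_space U J\<close> and an independent family.\<close>
definition component :: "('i \<Rightarrow> 'v::comm_monoid_add set) \<Rightarrow> 'i set \<Rightarrow> 'i \<Rightarrow> 'v \<Rightarrow> 'v" where
  "component U J k v = (SOME u. (\<forall>j\<in>J. u j \<in> U j) \<and> v = (\<Sum>j\<in>J. u j)) k"

lemma direct_sum_iff:
  "direct_sum scale U n W \<longleftrightarrow> (\<forall>j<n. module.subspace scale (U j)) \<and>
     independent_family U {..<n} \<and> W = sum_space U {..<n}"
  unfolding direct_sum_def independent_family_def sum_space_def by (simp add: Ball_def)

lemma sum_space_reindex:
  assumes e: "bij_betw e K J"
  shows "sum_space (U \<circ> e) K = sum_space U J"
proof -
  note inv_in = bij_betw_apply[OF bij_betw_inv_into[OF e]]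
    and inv_e = bij_betw_inv_into_left[OF e] and e_inv = bij_betw_inv_into_right[OF e]
  have "(\<exists>u. x = (\<Sum>i\<in>K. u i) \<and> (\<forall>i\<in>K. u i \<in> U (e i))) \<longleftrightarrow>
        (\<exists>v. x = (\<Sum>j\<in>J. v j) \<and> (\<forall>j\<in>J. v j \<in> U j))" for x
  proof
    assume "\<exists>u. x = (\<Sum>i\<in>K. u i) \<and> (\<forall>i\<in>K. u i \<in> U (e i))"
    then obtain u where u: "x = (\<Sum>i\<in>K. u i)" "\<forall>i\<in>K. u i \<in> U (e i)" by blast
    have "x = (\<Sum>j\<in>J. u (inv_into K e j))"
      using u(1) sum.reindex_bij_betw[OF e, of "\<lambda>j. u (inv_into K e j)"] inv_e by simp
    moreover have "\<forall>j\<in>J. u (inv_into K e j) \<in> U j"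
      using u(2) inv_in e_inv by metis
    ultimately show "\<exists>v. x = (\<Sum>j\<in>J. v j) \<and> (\<forall>j\<in>J. v j \<in> U j)" by blast
  next
    assume "\<exists>v. x = (\<Sum>j\<in>J. v j) \<and> (\<forall>j\<in>J. v j \<in> U j)"
    then obtain v where "x = (\<Sum>j\<in>J. v j)" "\<forall>j\<in>J. v j \<in> U j" by blast
    then show "\<exists>u. x = (\<Sum>i\<in>K. u i) \<and> (\<forall>i\<in>K. u i \<in> U (e i))"
      using sum.reindex_bij_betw[OF e, of v] bij_betw_apply[OF e]
      by (intro exI[of _ "\<lambda>i. v (e i)"]) auto
  qed
  then show ?thesis unfolding sum_space_def by auto
qed

lemma independent_family_reindex:
  assumes e: "bij_betw e K J"
  shows "independent_family (U \<circ> e) K \<longleftrightarrow> independent_family U J"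
proof -
  note e_in = bij_betw_apply[OF e] and inv_in = bij_betw_apply[OF bij_betw_inv_into[OF e]]
    and inv_e = bij_betw_inv_into_left[OF e] and e_inv = bij_betw_inv_into_right[OF e]
  show ?thesis
  proof
    assume ind: "independent_family (U \<circ> e) K"
    show "independent_family U J"
      unfolding independent_family_def
    proof (intro allI impI ballI)
      fix v j assume v: "(\<forall>j\<in>J. v j \<in> U j) \<and> (\<Sum>j\<in>J. v j) = 0" and j: "j \<in> J"
      have "(v \<circ> e) (inv_into K e j) = 0"
        by (rule independent_familyD[OF ind]) (use v e_in sum.reindex_bij_betw[OF e, of v] inv_in[OF j] in auto)
      then show "v j = 0" using e_inv[OF j] by simp
    qed
  next
    assume ind: "independent_family U J"
    show "independent_family (U \<circ> e) K"
      unfolding independent_family_def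
    proof (intro allI impI ballI)
      fix u i assume u: "(\<forall>i\<in>K. u i \<in> (U \<circ> e) i) \<and> (\<Sum>i\<in>K. u i) = 0" and i: "i \<in> K"
      have "(\<Sum>j\<in>J. u (inv_into K e j)) = (\<Sum>i\<in>K. u i)"
        using sum.reindex_bij_betw[OF e, of "\<lambda>j. u (inv_into K e j)"] inv_e by simp
      moreover have mem: "\<forall>j\<in>J. u (inv_into K e j) \<in> U j"
        using u inv_in e_inv by (metis comp_apply)
      ultimately have "u (inv_into K e (e i)) = 0"
        using independent_familyD[OF ind mem _ e_in[OF i]] u by simp
      then show "u i = 0" using inv_e[OF i] by simp
    qed
  qed
qed

lemma independent_family_subset:
  assumes ind: "independent_family U J" and "finite J" and "K \<subseteq> J" and "\<forall>j\<in>J. 0 \<in> U j"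
  shows "independent_family U K"
  unfolding independent_family_def
proof (intro allI impI)
  fix u assume u: "(\<forall>j\<in>K. u j \<in> U j) \<and> (\<Sum>j\<in>K. u j) = 0"
  let ?u = "\<lambda>j. if j \<in> K then u j else 0"
  have "(\<Sum>j\<in>J. ?u j) = (\<Sum>j\<in>K. u j)"
    using assms(2,3) by (simp add: sum.If_cases Int_absorb1)
  then have "\<forall>j\<in>J. ?u j = 0"
    using u assms(4) by (intro ballI) (rule independent_familyD[OF ind], auto)
  then show "\<forall>j\<in>K. u j = 0" using assms(3) by (metis subsetD)
qed

lemma independent_family_insert:
  fixes U :: "'i \<Rightarrow> 'v::ab_group_add set"
  assumes ind: "independent_family U J" and "finite J" and "k \<notin> J"
    and neg: "\<forall>j\<in>J. \<forall>x\<in>U j. - x \<in> U j" and meet: "U k \<inter> sum_space U J \<subseteq> {0}"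
  shows "independent_family U (insert k J)"
  unfolding independent_family_def
proof (intro allI impI)
  fix u assume u: "(\<forall>j\<in>insert k J. u j \<in> U j) \<and> (\<Sum>j\<in>insert k J. u j) = 0"
  then have sum: "u k + (\<Sum>j\<in>J. u j) = 0" using assms(2,3) by simp
  then have "u k = (\<Sum>j\<in>J. - u j)" by (simp add: sum_negf eq_neg_iff_add_eq_0)
  moreover have "(\<Sum>j\<in>J. - u j) \<in> sum_space U J" using u neg unfolding sum_space_def by auto
  ultimately have "u k = 0" using u meet by auto
  moreover have "\<forall>j\<in>J. u j = 0"
    using sum u \<open>u k = 0\<close> by (intro ballI) (rule independent_familyD[OF ind], auto)
  ultimately show "\<forall>j\<in>insert k J. u j = 0" by simp
qed

lemma component_sum:
  assumes "v \<in> sum_space U J"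
  shows "\<forall>j\<in>J. component U J j v \<in> U j" and "v = (\<Sum>j\<in>J. component U J j v)"
proof -
  have "\<exists>u. (\<forall>j\<in>J. u j \<in> U j) \<and> v = (\<Sum>j\<in>J. u j)"
    using assms unfolding sum_space_def by blast
  from someI_ex[OF this] show "\<forall>j\<in>J. component U J j v \<in> U j" "v = (\<Sum>j\<in>J. component U J j v)"
    unfolding component_def by blast+
qed

context vector_space
begin

lemma subspace_sum_space:
  assumes "\<forall>j\<in>J. subspace (U j)"
  shows "subspace (sum_space U J)"
  unfolding subspace_def sum_space_def
proof (intro conjI ballI allI)
  show "0 \<in> {\<Sum>j\<in>J. u j |u. \<forall>j\<in>J. u j \<in> U j}"
    using assms by (auto intro!: exI[of _ "\<lambda>_. 0"] simp: subspace_0)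
  fix x y assume "x \<in> {\<Sum>j\<in>J. u j |u. \<forall>j\<in>J. u j \<in> U j}" "y \<in> {\<Sum>j\<in>J. u j |u. \<forall>j\<in>J. u j \<in> U j}"
  then obtain u v where "x = (\<Sum>j\<in>J. u j)" "\<forall>j\<in>J. u j \<in> U j" "y = (\<Sum>j\<in>J. v j)" "\<forall>j\<in>J. v j \<in> U j"
    by blast
  then show "x + y \<in> {\<Sum>j\<in>J. u j |u. \<forall>j\<in>J. u j \<in> U j}"
    using assms by (auto intro!: exI[of _ "\<lambda>j. u j + v j"] simp: sum.distrib subspace_add)
next
  fix c x assume "x \<in> {\<Sum>j\<in>J. u j |u. \<forall>j\<in>J. u j \<in> U j}"
  then obtain u where "x = (\<Sum>j\<in>J. u j)" "\<forall>j\<in>J. u j \<in> U j" by blast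
  then show "c *s x \<in> {\<Sum>j\<in>J. u j |u. \<forall>j\<in>J. u j \<in> U j}"
    using assms by (auto intro!: exI[of _ "\<lambda>j. c *s u j"] simp: scale_sum_right subspace_scale)
qed

lemma subset_sum_space:
  assumes "finite J" and "k \<in> J" and "\<forall>j\<in>J. subspace (U j)"
  shows "U k \<subseteq> sum_space U J"
proof
  fix x assume "x \<in> U k"
  then show "x \<in> sum_space U J"
    using assms unfolding sum_space_def
    by (intro CollectI exI[of _ "\<lambda>j. if j = k then x else 0"]) (auto simp: subspace_0)
qed

lemma sum_space_eq_span:
  assumes "finite J" and "\<forall>j\<in>J. subspace (U j)"
  shows "sum_space U J = span (\<Union>j\<in>J. U j)"
proof
  show "sum_space U J \<subseteq> span (\<Union>j\<in>J. U j)"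
    unfolding sum_space_def by (auto intro!: span_sum) (auto intro: span_base)
  show "span (\<Union>j\<in>J. U j) \<subseteq> sum_space U J"
    by (rule span_minimal)
      (use subset_sum_space[OF assms(1) _ assms(2)] subspace_sum_space[OF assms(2)] in auto)
qed

lemma component_eqI:
  assumes ind: "independent_family U J" and sub: "\<forall>j\<in>J. subspace (U j)"
    and u: "\<forall>j\<in>J. u j \<in> U j" and v: "v = (\<Sum>j\<in>J. u j)" and k: "k \<in> J"
  shows "component U J k v = u k"
proof -
  have v_in: "v \<in> sum_space U J" using u v unfolding sum_space_def by blast
  have "\<forall>j\<in>J. component U J j v - u j \<in> U j"
    using component_sum(1)[OF v_in] u sub by (simp add: subspace_diff)
  moreover have "(\<Sum>j\<in>J. component U J j v - u j) = 0"
    using component_sum(2)[OF v_in] v by (simp add: sum_subtractf)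
  ultimately have "\<forall>j\<in>J. component U J j v - u j = 0"
    by (intro ballI) (rule independent_familyD[OF ind])
  then show ?thesis using k by simp
qed

lemma linear_on_component:
  assumes ind: "independent_family U J" and sub: "\<forall>j\<in>J. subspace (U j)" and k: "k \<in> J"
  shows "linear_on scale (sum_space U J) (component U J k)"
  unfolding linear_on_def
proof (intro conjI ballI allI)
  fix x y assume "x \<in> sum_space U J" "y \<in> sum_space U J"
  note cx = component_sum[OF this(1)] and cy = component_sum[OF this(2)]
  show "component U J k (x + y) = component U J k x + component U J k y"
    by (rule component_eqI[OF ind sub _ _ k]) (use cx cy sub in \<open>auto simp: subspace_add sum.distrib\<close>)
next
  fix c x assume "x \<in> sum_space U J"
  note cx = component_sum[OF this]
  show "component U J k (c *s x) = c *s component U J k x"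
    by (rule component_eqI[OF ind sub _ _ k]) (use cx sub in \<open>auto simp: subspace_scale scale_sum_right[symmetric]\<close>)
qed

lemma component_commute:
  assumes ind: "independent_family U J" and sub: "\<forall>j\<in>J. subspace (U j)" and k: "k \<in> J"
    and f: "Vector_Spaces.linear scale scale f" and inv: "\<forall>j\<in>J. f ` U j \<subseteq> U j"
    and v: "v \<in> sum_space U J"
  shows "component U J k (f v) = f (component U J k v)"
proof -
  interpret f: Vector_Spaces.linear scale scale f by fact
  show ?thesis
    by (rule component_eqI[OF ind sub _ _ k])
      (use component_sum[OF v] inv in \<open>auto simp: f.sum[symmetric]\<close>)
qed

lemma direct_sum_enumerate:
  assumes "finite J" and "\<forall>j\<in>J. subspace (U j)" and "independent_family U J"
  obtains e where "bij_betw e {..<card J} J" and "direct_sum scale (U \<circ> e) (card J) (sum_space U J)"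
proof -
  obtain e where e: "bij_betw e {..<card J} J"
    using ex_bij_betw_nat_finite[OF assms(1)] by (auto simp: atLeast0LessThan)
  moreover have "direct_sum scale (U \<circ> e) (card J) (sum_space U J)"
    unfolding direct_sum_iff
    using assms(2,3) bij_betw_apply[OF e] sum_space_reindex[OF e, of U] independent_family_reindex[OF e, of U]
    by simp
  ultimately show ?thesis by (rule that)
qed

lemma independent_family_linear_image:
  assumes f: "Vector_Spaces.linear scale scale f" "inj f" and ind: "independent_family U J"
  shows "independent_family (\<lambda>j. f ` U j) J"
  unfolding independent_family_def
proof (intro allI impI)
  interpret f: Vector_Spaces.linear scale scale f by fact
  fix u assume u: "(\<forall>j\<in>J. u j \<in> f ` U j) \<and> (\<Sum>j\<in>J. u j) = 0"
  then have "\<forall>j\<in>J. \<exists>x. x \<in> U j \<and> u j = f x" by blast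
  from bchoice[OF this] obtain v where v: "\<forall>j\<in>J. v j \<in> U j \<and> u j = f (v j)" by blast
  then have "f (\<Sum>j\<in>J. v j) = f 0" using u by (simp add: f.sum f.zero)
  then have "(\<Sum>j\<in>J. v j) = 0" using f(2) by (metis injD)
  then have "\<forall>j\<in>J. v j = 0" using v by (intro ballI) (rule independent_familyD[OF ind], auto)
  then show "\<forall>j\<in>J. u j = 0" using v f.zero by auto
qed

lemma sum_space_linear_image:
  assumes f: "Vector_Spaces.linear scale scale f"
  shows "f ` sum_space U J = sum_space (\<lambda>j. f ` U j) J"
proof
  interpret f: Vector_Spaces.linear scale scale f by fact
  show "f ` sum_space U J \<subseteq> sum_space (\<lambda>j. f ` U j) J"
    unfolding sum_space_def by (auto simp: f.sum)
  show "sum_space (\<lambda>j. f ` U j) J \<subseteq> f ` sum_space U J"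
  proof
    fix x assume "x \<in> sum_space (\<lambda>j. f ` U j) J"
    then obtain u where x: "x = (\<Sum>j\<in>J. u j)" and u: "\<forall>j\<in>J. u j \<in> f ` U j"
      unfolding sum_space_def by auto
    then have "\<forall>j\<in>J. \<exists>y. y \<in> U j \<and> u j = f y" by blast
    from bchoice[OF this] obtain v where v: "\<forall>j\<in>J. v j \<in> U j \<and> u j = f (v j)" by blast
    then have "x = f (\<Sum>j\<in>J. v j)" using x by (simp add: f.sum)
    moreover have "(\<Sum>j\<in>J. v j) \<in> sum_space U J" using v by (intro sum_space_memI) auto
    ultimately show "x \<in> f ` sum_space U J" by blast
  qed
qed

lemma direct_sum_linear_image:
  assumes f: "Vector_Spaces.linear scale scale f" "inj f" and ds: "direct_sum scale U n W"
  shows "direct_sum scale (\<lambda>j. f ` U j) n (f ` W)"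
proof -
  interpret f: Vector_Spaces.linear scale scale f by fact
  have "\<forall>j<n. subspace (U j)" "independent_family U {..<n}" "W = sum_space U {..<n}"
    using ds unfolding direct_sum_iff by auto
  then show ?thesis
    unfolding direct_sum_iff
    using independent_family_linear_image[OF f, of U "{..<n}"] sum_space_linear_image[OF f(1), of U "{..<n}"]
      f.subspace_image
    by simp
qed

end

section \<open>Clifford theory for a finite group acting irreducibly\<close>

locale irreducible_action = vector_space scale
  for scale :: "'k::field \<Rightarrow> 'v::ab_group_add \<Rightarrow> 'v" +
  fixes Phi :: "('v \<Rightarrow> 'v) set"
  assumes linear_Phi: "f \<in> Phi \<Longrightarrow> Vector_Spaces.linear scale scale f"
    and finite_Phi: "finite Phi"
    and id_Phi: "id \<in> Phi"
    and comp_Phi: "f \<in> Phi \<Longrightarrow> g \<in> Phi \<Longrightarrow> f \<circ> g \<in> Phi"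
    and inverse_Phi: "f \<in> Phi \<Longrightarrow> \<exists>h\<in>Phi. h \<circ> f = id \<and> f \<circ> h = id"
    and Phi_irreducible: "subspace W \<Longrightarrow> \<forall>f\<in>Phi. f ` W \<subseteq> W \<Longrightarrow> W = {0} \<or> W = UNIV"
    and nontrivial: "UNIV \<noteq> {0::'v}"
begin

sublocale endo: vector_space_pair scale scale ..

lemma bij_Phi: "f \<in> Phi \<Longrightarrow> bij f"
  using inverse_Phi o_bij by metis

lemma inv_Phi: "f \<in> Phi \<Longrightarrow> inv_into UNIV f \<in> Phi"
  using inverse_Phi inv_unique_comp by metis

lemma Phi_inv_apply: "f \<in> Phi \<Longrightarrow> inv_into UNIV f (f v) = v"
  and Phi_apply_inv: "f \<in> Phi \<Longrightarrow> f (inv_into UNIV f v) = v"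
  using bij_Phi by (simp_all add: bij_is_inj bij_is_surj surj_f_inv_f)

lemma Phi_inv_image: "f \<in> Phi \<Longrightarrow> inv_into UNIV f ` f ` W = W"
  and Phi_image_inv: "f \<in> Phi \<Longrightarrow> f ` inv_into UNIV f ` W = W"
  using bij_Phi by (simp_all add: image_comp bij_is_inj bij_is_surj surj_f_inv_f)

lemma span_Phi_orbit:
  assumes "w \<in> S" and "w \<noteq> 0"
  shows "span (\<Union>f\<in>Phi. f ` S) = UNIV"
proof -
  let ?X = "\<Union>f\<in>Phi. f ` S"
  have "g ` span ?X \<subseteq> span ?X" if g: "g \<in> Phi" for g
  proof -
    have "g ` ?X \<subseteq> ?X" using comp_Phi[OF g] by (fastforce simp: image_comp)
    then show ?thesis using endo.linear_span_image[OF linear_Phi[OF g]] span_mono by metis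
  qed
  moreover have "w \<in> span ?X" using id_Phi assms(1) by (auto intro!: span_base)
  ultimately show ?thesis
    using Phi_irreducible[OF subspace_span] assms(2) by blast
qed

lemma finite_basis:
  obtains B where "finite B" and "independent B" and "span B = UNIV"
proof -
  obtain v :: 'v where v: "v \<noteq> 0" using nontrivial by blast
  have "(\<Union>f\<in>Phi. f ` {v}) = (\<lambda>f. f v) ` Phi" by blast
  then have "span ((\<lambda>f. f v) ` Phi) = UNIV" using span_Phi_orbit[of v "{v}"] v by simp
  moreover obtain B where "B \<subseteq> (\<lambda>f. f v) ` Phi" "independent B" "(\<lambda>f. f v) ` Phi \<subseteq> span B"
    using maximal_independent_subset by blast
  moreover have "finite B" using calculation(2) finite_Phi finite_subset by blast
  ultimately show ?thesis
    using that span_mono[of "(\<lambda>f. f v) ` Phi" "span B"] by (simp add: span_span top.extremum_unique)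
qed

end

locale clifford = irreducible_action scale Phi + finite_dimensional_vector_space scale Basis
  for scale :: "'k::field \<Rightarrow> 'v::ab_group_add \<Rightarrow> 'v" and Phi and Basis +
  fixes N :: "('v \<Rightarrow> 'v) set"
  assumes linear_N: "x \<in> N \<Longrightarrow> Vector_Spaces.linear scale scale x"
    \<comment> \<open>two factors, since conjugating \<open>\<rho>(a)\<close> by \<open>\<phi>(c,d)\<close> gives \<open>\<beta>(t)\<rho>(s)\<close>\<close>
    and N_normalized: "f \<in> Phi \<Longrightarrow> x \<in> N \<Longrightarrow> \<exists>y\<in>N. \<exists>z\<in>N. x \<circ> f = f \<circ> y \<circ> z"
begin

definition N_invariant :: "'v set \<Rightarrow> bool" where
  "N_invariant W \<longleftrightarrow> subspace W \<and> (\<forall>x\<in>N. x ` W \<subseteq> W)"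

definition N_irreducible :: "'v set \<Rightarrow> bool" where
  "N_irreducible W \<longleftrightarrow> N_invariant W \<and> W \<noteq> {0} \<and> (\<forall>U. N_invariant U \<and> U \<subseteq> W \<longrightarrow> U = {0} \<or> U = W)"

definition N_hom :: "'v set \<Rightarrow> ('v \<Rightarrow> 'v) \<Rightarrow> bool" where
  "N_hom W T \<longleftrightarrow> linear_on scale W T \<and> (\<forall>x\<in>N. \<forall>w\<in>W. T (x w) = x (T w))"

definition N_equivalent :: "'v set \<Rightarrow> 'v set \<Rightarrow> bool" where
  "N_equivalent W W' \<longleftrightarrow> (\<exists>T. N_hom W T \<and> bij_betw T W W')"

definition homogeneous_component :: "'v set \<Rightarrow> 'v set" where
  "homogeneous_component S = span (\<Union>{W. N_irreducible W \<and> N_equivalent W S})"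

lemma N_irreducible_invariant: "N_irreducible W \<Longrightarrow> N_invariant W"
  and N_irreducible_subspace: "N_irreducible W \<Longrightarrow> subspace W"
  unfolding N_irreducible_def N_invariant_def by auto

lemma N_irreducible_nonzero:
  assumes "N_irreducible W"
  shows "\<exists>w\<in>W. w \<noteq> 0"
proof -
  have "0 \<in> W" "W \<noteq> {0}"
    using assms subspace_0 unfolding N_irreducible_def N_invariant_def by auto
  then show ?thesis by blast
qed

lemma N_irreducible_minimal:
  "N_irreducible W \<Longrightarrow> N_invariant U \<Longrightarrow> U \<subseteq> W \<Longrightarrow> U \<noteq> {0} \<Longrightarrow> U = W"
  unfolding N_irreducible_def by blast

lemma N_invariant_hom_image:
  assumes W: "N_invariant W" and T: "N_hom W T"
  shows "N_invariant (T ` W)"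
proof -
  have "x (T w) \<in> T ` W" if "x \<in> N" "w \<in> W" for x w
    using that W T unfolding N_invariant_def N_hom_def by (metis image_eqI image_subset_iff)
  then show ?thesis
    using W T subspace_linear_on_image unfolding N_invariant_def N_hom_def by blast
qed

lemma N_invariant_hom_kernel:
  assumes W: "N_invariant W" and T: "N_hom W T"
  shows "N_invariant {w\<in>W. T w = 0}"
proof -
  have "x w \<in> W \<and> T (x w) = 0" if "x \<in> N" "w \<in> W" "T w = 0" for x w
    using that W T endo.linear_0[OF linear_N] unfolding N_invariant_def N_hom_def by fastforce
  then show ?thesis
    using W T subspace_linear_on_kernel unfolding N_invariant_def N_hom_def by auto
qed

lemma N_hom_comp:
  assumes "N_hom W T" and "T ` W \<subseteq> W'" and "N_hom W' T'"
  shows "N_hom W (T' \<circ> T)"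
  using assms linear_on_comp unfolding N_hom_def by (auto simp: image_subset_iff)

lemma N_hom_inv_into:
  assumes W: "N_invariant W" and T: "N_hom W T" and bij: "bij_betw T W W'"
  shows "N_hom W' (inv_into W T)"
  unfolding N_hom_def
proof (intro conjI ballI)
  show "linear_on scale W' (inv_into W T)"
    using W T bij linear_on_inv_into unfolding N_invariant_def N_hom_def by blast
next
  fix x w' assume x: "x \<in> N" and w': "w' \<in> W'"
  define w where "w = inv_into W T w'"
  have w: "w \<in> W" "T w = w'"
    using w' bij unfolding w_def bij_betw_def by (auto simp: inv_into_into f_inv_into_f)
  have "x w \<in> W" using W x w(1) unfolding N_invariant_def by blast
  moreover have "T (x w) = x w'" using T x w unfolding N_hom_def by auto
  ultimately show "inv_into W T (x w') = x (inv_into W T w')"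
    using bij unfolding w_def[symmetric] bij_betw_def by (metis inv_into_f_f)
qed

lemma N_equivalent_sym: "N_invariant W \<Longrightarrow> N_equivalent W W' \<Longrightarrow> N_equivalent W' W"
  unfolding N_equivalent_def using N_hom_inv_into bij_betw_inv_into by blast

lemma N_equivalent_trans:
  assumes "N_equivalent W W'" and "N_equivalent W' W''"
  shows "N_equivalent W W''"
proof -
  obtain T where T: "N_hom W T" "bij_betw T W W'" using assms(1) unfolding N_equivalent_def by blast
  obtain T' where T': "N_hom W' T'" "bij_betw T' W' W''" using assms(2) unfolding N_equivalent_def by blast
  have "N_hom W (T' \<circ> T)" using N_hom_comp[OF T(1) _ T'(1)] bij_betw_imp_surj_on[OF T(2)] by blast
  then show ?thesis using bij_betw_trans[OF T(2) T'(2)] unfolding N_equivalent_def by blast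
qed

lemma schur_lemma:
  assumes W: "N_irreducible W" and W': "N_irreducible W'"
    and T: "N_hom W T" and into: "T ` W \<subseteq> W'" and w: "w \<in> W" "T w \<noteq> 0"
  shows "N_equivalent W W'"
proof -
  have sub: "subspace W" using N_irreducible_subspace[OF W] .
  have "{v\<in>W. T v = 0} \<noteq> W" using w by blast
  then have "{v\<in>W. T v = 0} = {0}"
    using W N_invariant_hom_kernel[OF N_irreducible_invariant[OF W] T]
    unfolding N_irreducible_def by blast
  then have "inj_on T W"
    using linear_on_inj_onI[OF sub] T unfolding N_hom_def by blast
  moreover have "T ` W = W'"
    using N_irreducible_minimal[OF W' N_invariant_hom_image[OF N_irreducible_invariant[OF W] T] into] w
    by blast
  ultimately show ?thesis
    using T unfolding N_equivalent_def bij_betw_def by blast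
qed

lemma N_equivalent_component:
  assumes ind: "independent_family U J" and U: "\<forall>j\<in>J. N_irreducible (U j)"
    and W: "N_irreducible W" and W_sum: "W \<subseteq> sum_space U J" and k: "k \<in> J"
    and w: "w \<in> W" "component U J k w \<noteq> 0"
  shows "N_equivalent W (U k)"
proof (rule schur_lemma[OF W U[rule_format, OF k], of "component U J k" w])
  have sub: "\<forall>j\<in>J. subspace (U j)" using U N_irreducible_subspace by blast
  have inv: "\<forall>x\<in>N. \<forall>j\<in>J. x ` U j \<subseteq> U j"
    using U unfolding N_irreducible_def N_invariant_def by blast
  show "N_hom W (component U J k)"
    unfolding N_hom_def
    using linear_on_subset[OF linear_on_component[OF ind sub k] W_sum]
      component_commute[OF ind sub k linear_N] inv W_sum by blast
  show "component U J k ` W \<subseteq> U k"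
    using component_sum(1) W_sum k by blast
qed (use w in auto)

lemma N_invariant_Phi_image:
  assumes f: "f \<in> Phi" and W: "N_invariant W"
  shows "N_invariant (f ` W)"
  unfolding N_invariant_def
proof (intro conjI ballI)
  show "subspace (f ` W)"
    using W endo.linear_subspace_image[OF linear_Phi[OF f]] unfolding N_invariant_def by blast
  fix x assume x: "x \<in> N"
  obtain y z where yz: "y \<in> N" "z \<in> N" "x \<circ> f = f \<circ> y \<circ> z" using N_normalized[OF f x] by blast
  have "x (f w) \<in> f ` W" if "w \<in> W" for w
  proof -
    have "y (z w) \<in> W" using W yz(1,2) that unfolding N_invariant_def by blast
    then show ?thesis using fun_cong[OF yz(3), of w] by simp
  qed
  then show "x ` f ` W \<subseteq> f ` W" by blast
qed

lemma N_irreducible_Phi_image: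
  assumes f: "f \<in> Phi" and W: "N_irreducible W"
  shows "N_irreducible (f ` W)"
  unfolding N_irreducible_def
proof (intro conjI allI impI)
  show "N_invariant (f ` W)" using N_invariant_Phi_image[OF f N_irreducible_invariant[OF W]] .
  show "f ` W \<noteq> {0}"
    using N_irreducible_nonzero[OF W] bij_Phi[OF f] endo.linear_0[OF linear_Phi[OF f]]
    by (metis bij_is_inj image_eqI injD singletonD)
  fix U assume U: "N_invariant U \<and> U \<subseteq> f ` W"
  have "inv_into UNIV f ` U \<subseteq> W" using U Phi_inv_image[OF f, of W] by blast
  then have "inv_into UNIV f ` U = {0} \<or> inv_into UNIV f ` U = W"
    using W N_invariant_Phi_image[OF inv_Phi[OF f]] U unfolding N_irreducible_def by blast
  then show "U = {0} \<or> U = f ` W"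
    using Phi_image_inv[OF f, of U] endo.linear_0[OF linear_Phi[OF f]] by auto
qed

lemma N_equivalent_Phi_image:
  assumes f: "f \<in> Phi" and W: "N_invariant W" and WS: "N_equivalent W S"
  shows "N_equivalent (f ` W) (f ` S)"
proof -
  obtain T where T: "N_hom W T" and bij: "bij_betw T W S"
    using WS unfolding N_equivalent_def by blast
  let ?T = "f \<circ> T \<circ> inv_into UNIV f"
  have fbij: "bij f" and inv_f: "\<And>v. inv_into UNIV f (f v) = v"
    using bij_Phi[OF f] by (auto simp: bij_is_inj)
  have "linear_on scale (f ` W) (T \<circ> inv_into UNIV f)"
    using linear_on_comp[OF linear_imp_linear_on[OF linear_Phi[OF inv_Phi[OF f]]] _ T[unfolded N_hom_def, THEN conjunct1]]
      Phi_inv_image[OF f] by simp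
  then have "linear_on scale (f ` W) ?T"
    using linear_on_comp[OF _ subset_UNIV linear_imp_linear_on[OF linear_Phi[OF f]]] by (simp add: comp_assoc)
  moreover have "?T (x v) = x (?T v)" if x: "x \<in> N" and v: "v \<in> f ` W" for x v
  proof -
    obtain w where w: "w \<in> W" "v = f w" using v by blast
    obtain y z where yz: "y \<in> N" "z \<in> N" "x \<circ> f = f \<circ> y \<circ> z" using N_normalized[OF f x] by blast
    have x_f: "x (f u) = f (y (z u))" for u using fun_cong[OF yz(3), of u] by simp
    have "z w \<in> W" using W yz(2) w(1) unfolding N_invariant_def by blast
    then have "T (y (z w)) = y (z (T w))" using T yz(1,2) w(1) unfolding N_hom_def by simp
    then show ?thesis using w x_f inv_f by simp
  qed
  moreover have "bij_betw ?T (f ` W) (f ` S)"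
  proof -
    have "bij_betw (inv_into UNIV f) (f ` W) W" "bij_betw f S (f ` S)"
      using bij_betw_subset[OF bij_imp_bij_inv[OF fbij] subset_UNIV Phi_inv_image[OF f]]
        bij_betw_subset[OF fbij subset_UNIV refl] by auto
    then show ?thesis
      using bij_betw_trans[OF bij_betw_trans[OF _ bij]] by (simp add: comp_assoc)
  qed
  ultimately show ?thesis unfolding N_equivalent_def N_hom_def by blast
qed

lemma homogeneous_component_Phi_image:
  assumes f: "f \<in> Phi" and S: "N_irreducible S"
  shows "f ` homogeneous_component S = homogeneous_component (f ` S)"
proof -
  have fwd: "\<And>W. N_irreducible W \<Longrightarrow> N_equivalent W S \<Longrightarrow>
      N_irreducible (f ` W) \<and> N_equivalent (f ` W) (f ` S)"
    using N_irreducible_Phi_image[OF f] N_equivalent_Phi_image[OF f] N_irreducible_invariant by blast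
  have bwd: "\<And>W. N_irreducible W \<Longrightarrow> N_equivalent W (f ` S) \<Longrightarrow>
      N_irreducible (inv_into UNIV f ` W) \<and> N_equivalent (inv_into UNIV f ` W) S"
    using N_irreducible_Phi_image[OF inv_Phi[OF f]] N_equivalent_Phi_image[OF inv_Phi[OF f]]
      N_irreducible_invariant Phi_inv_image[OF f] by metis
  have "f ` \<Union>{W. N_irreducible W \<and> N_equivalent W S} = \<Union>{W. N_irreducible W \<and> N_equivalent W (f ` S)}"
  proof
    show "f ` \<Union>{W. N_irreducible W \<and> N_equivalent W S} \<subseteq> \<Union>{W. N_irreducible W \<and> N_equivalent W (f ` S)}"
      using fwd by blast
    show "\<Union>{W. N_irreducible W \<and> N_equivalent W (f ` S)} \<subseteq> f ` \<Union>{W. N_irreducible W \<and> N_equivalent W S}"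
    proof
      fix v assume "v \<in> \<Union>{W. N_irreducible W \<and> N_equivalent W (f ` S)}"
      then obtain W where W: "v \<in> W" "N_irreducible W" "N_equivalent W (f ` S)" by blast
      have "inv_into UNIV f v \<in> inv_into UNIV f ` W" using W(1) by blast
      with bwd[OF W(2,3)] have "inv_into UNIV f v \<in> \<Union>{W. N_irreducible W \<and> N_equivalent W S}"
        by blast
      then show "v \<in> f ` \<Union>{W. N_irreducible W \<and> N_equivalent W S}"
        using Phi_apply_inv[OF f, of v] by (metis image_eqI)
    qed
  qed
  then show ?thesis
    unfolding homogeneous_component_def endo.linear_span_image[OF linear_Phi[OF f], symmetric] by simp
qed

lemma homogeneous_component_cong:
  "N_invariant S \<Longrightarrow> N_equivalent S S' \<Longrightarrow> homogeneous_component S = homogeneous_component S'"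
  unfolding homogeneous_component_def using N_equivalent_sym N_equivalent_trans by metis

lemma dim_Phi_image: "f \<in> Phi \<Longrightarrow> subspace W \<Longrightarrow> dim (f ` W) = dim W"
  by (rule dim_eq_of_bij_betw[OF _ linear_imp_linear_on[OF linear_Phi]])
    (use bij_betw_subset[OF bij_Phi subset_UNIV refl] in auto)

lemma N_invariant_Int:
  assumes A: "N_invariant A" and B: "N_invariant B"
  shows "N_invariant (A \<inter> B)"
  unfolding N_invariant_def
proof (intro conjI ballI)
  show "subspace (A \<inter> B)" using A B unfolding N_invariant_def by (intro subspace_inter) auto
  fix x assume "x \<in> N"
  then have "x ` A \<subseteq> A" "x ` B \<subseteq> B" using A B unfolding N_invariant_def by auto
  then show "x ` (A \<inter> B) \<subseteq> A \<inter> B" by auto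
qed

lemma N_invariant_sum_space:
  assumes U: "\<forall>j\<in>J. N_invariant (U j)"
  shows "N_invariant (sum_space U J)"
proof -
  have "x w \<in> sum_space U J" if x: "x \<in> N" and w: "w \<in> sum_space U J" for x w
  proof -
    obtain u where w_sum: "w = (\<Sum>j\<in>J. u j)" and u: "\<forall>j\<in>J. u j \<in> U j"
      using w unfolding sum_space_def by auto
    have "\<forall>j\<in>J. x (u j) \<in> U j"
      using U u x unfolding N_invariant_def image_subset_iff by blast
    then have "(\<Sum>j\<in>J. x (u j)) \<in> sum_space U J" by (rule sum_space_memI)
    then show ?thesis using w_sum endo.linear_sum[OF linear_N[OF x], of u J] by simp
  qed
  moreover have "subspace (sum_space U J)"
    by (rule subspace_sum_space) (use U in \<open>simp add: N_invariant_def\<close>)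
  ultimately show ?thesis unfolding N_invariant_def by (simp add: image_subset_iff)
qed

lemma exists_N_irreducible: "\<exists>W. N_irreducible W"
proof -
  have "N_invariant UNIV \<and> (UNIV::'v set) \<noteq> {0}"
    using nontrivial by (simp add: N_invariant_def subspace_UNIV)
  from ex_has_least_nat[of "\<lambda>W. N_invariant W \<and> W \<noteq> {0}", OF this]
  obtain W where W: "N_invariant W" "W \<noteq> {0}"
    and least: "\<And>U. N_invariant U \<and> U \<noteq> {0} \<Longrightarrow> dim W \<le> dim U"
    by auto
  have "N_irreducible W"
    unfolding N_irreducible_def
  proof (intro conjI allI impI W)
    fix U assume U: "N_invariant U \<and> U \<subseteq> W"
    show "U = {0} \<or> U = W"
    proof (cases "U = {0}")
      case False
      then have "dim W \<le> dim U" using least U by blast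
      then show ?thesis using subspace_dim_equal[of U W] U W(1) unfolding N_invariant_def by blast
    qed simp
  qed
  then show ?thesis ..
qed

lemma independent_family_insert_N_irreducible:
  assumes fin: "finite F" and f: "f \<notin> F" and ind: "independent_family U F"
    and U: "\<forall>j\<in>F. N_irreducible (U j)" and Uf: "N_irreducible (U f)"
    and not_sub: "\<not> U f \<subseteq> sum_space U F"
  shows "independent_family U (insert f F)"
proof -
  have inv: "\<forall>j\<in>F. N_invariant (U j)" using U N_irreducible_invariant by blast
  have "N_invariant (U f \<inter> sum_space U F)"
    using N_invariant_Int[OF N_irreducible_invariant[OF Uf] N_invariant_sum_space[OF inv]] .
  then have "U f \<inter> sum_space U F = {0}"
    using N_irreducible_minimal[OF Uf _ Int_lower1] not_sub by blast
  then show ?thesis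
    using independent_family_insert[OF ind fin f] inv subspace_neg unfolding N_invariant_def by blast
qed

lemma exists_independent_translates:
  assumes S: "N_irreducible S"
  obtains F where "F \<subseteq> Phi" and "independent_family (\<lambda>f. f ` S) F"
    and "sum_space (\<lambda>f. f ` S) F = UNIV"
proof -
  let ?U = "\<lambda>f. f ` S"
  let ?C = "{F. F \<subseteq> Phi \<and> independent_family ?U F}"
  have U: "\<And>f. f \<in> Phi \<Longrightarrow> N_irreducible (?U f)" using N_irreducible_Phi_image[OF _ S] .
  have "finite ?C" by (rule finite_subset[of _ "Pow Phi"]) (use finite_Phi in auto)
  moreover have "{} \<in> ?C" unfolding independent_family_def by simp
  ultimately obtain F where "F \<in> ?C" and max: "\<forall>F'\<in>?C. F \<subseteq> F' \<longrightarrow> F = F'"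
    using finite_has_maximal[of ?C] by blast
  then have F: "F \<subseteq> Phi" "independent_family ?U F" by auto
  have fin: "finite F" using F(1) finite_Phi finite_subset by blast
  have sub: "\<forall>j\<in>F. subspace (?U j)" using F(1) U N_irreducible_subspace by blast
  have cover: "?U f \<subseteq> sum_space ?U F" if f: "f \<in> Phi" for f
  proof (rule ccontr)
    assume not_sub: "\<not> ?U f \<subseteq> sum_space ?U F"
    then have "f \<notin> F" using subset_sum_space[OF fin _ sub] by blast
    then have "independent_family ?U (insert f F)"
      using independent_family_insert_N_irreducible[OF fin _ F(2) _ U[OF f] not_sub] U F(1) by blast
    then have "insert f F \<in> ?C" using F(1) f by blast
    then show False using max \<open>f \<notin> F\<close> by blast
  qed
  have "span (\<Union>f\<in>Phi. ?U f) \<subseteq> sum_space ?U F"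
    using cover subspace_sum_space[OF sub] by (intro span_minimal) auto
  then have "sum_space ?U F = UNIV"
    using span_Phi_orbit N_irreducible_nonzero[OF S] by blast
  then show ?thesis using F that by blast
qed

context
  fixes S0 F
  assumes S0: "N_irreducible S0" and F_Phi: "F \<subseteq> Phi"
    and F_independent: "independent_family (\<lambda>f. f ` S0) F"
    and F_spanning: "sum_space (\<lambda>f. f ` S0) F = UNIV"
begin

lemma finite_F: "finite F"
  using F_Phi finite_Phi finite_subset by blast

lemma N_irreducible_translate: "k \<in> F \<Longrightarrow> N_irreducible (k ` S0)"
  using F_Phi N_irreducible_Phi_image[OF _ S0] by blast

lemma N_equivalent_translate:
  assumes S: "N_irreducible S"
  obtains k where "k \<in> F" and "N_equivalent S (k ` S0)"
proof -
  obtain s where s: "s \<in> S" "s \<noteq> 0" using N_irreducible_nonzero[OF S] by blast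
  have s_sum: "s \<in> sum_space (\<lambda>f. f ` S0) F" using F_spanning by simp
  obtain k where k: "k \<in> F" "component (\<lambda>f. f ` S0) F k s \<noteq> 0"
    using component_sum(2)[OF s_sum] s(2) by (metis sum.neutral)
  have "N_equivalent S (k ` S0)"
    by (rule N_equivalent_component[OF F_independent _ S _ k(1) s(1) k(2)])
      (use N_irreducible_translate F_spanning in auto)
  then show ?thesis using k(1) that by blast
qed

lemma homogeneous_component_translate:
  assumes S: "N_irreducible S"
  obtains k where "k \<in> Phi" and "N_equivalent S (k ` S0)"
    and "homogeneous_component S = k ` homogeneous_component S0"
proof -
  obtain k where k: "k \<in> F" "N_equivalent S (k ` S0)" using N_equivalent_translate[OF S] by blast
  have "homogeneous_component S = homogeneous_component (k ` S0)"
    using homogeneous_component_cong[OF N_irreducible_invariant[OF S] k(2)] .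
  also have "\<dots> = k ` homogeneous_component S0"
    using homogeneous_component_Phi_image[OF _ S0] F_Phi k(1) by blast
  finally show ?thesis using that F_Phi k by blast
qed

lemma homogeneous_component_eq_sum_translates:
  "homogeneous_component S0 = sum_space (\<lambda>f. f ` S0) {k\<in>F. N_equivalent (k ` S0) S0}"
proof -
  let ?U = "\<lambda>f. f ` S0"
  let ?J = "{k\<in>F. N_equivalent (k ` S0) S0}"
  have sub: "\<forall>j\<in>F. subspace (?U j)" using N_irreducible_translate N_irreducible_subspace by blast
  have "v \<in> sum_space ?U ?J" if W: "N_irreducible W" "N_equivalent W S0" and v: "v \<in> W" for W v
  proof -
    have v_sum: "v \<in> sum_space ?U F" using F_spanning by simp
    have "component ?U F k v = 0" if k: "k \<in> F - ?J" for k
    proof (rule ccontr)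
      assume "component ?U F k v \<noteq> 0"
      then have "N_equivalent W (k ` S0)"
        by (intro N_equivalent_component[OF F_independent _ W(1) _ _ v])
          (use N_irreducible_translate F_spanning k in auto)
      then have "N_equivalent (k ` S0) S0"
        using N_equivalent_sym[OF N_irreducible_invariant[OF W(1)]] N_equivalent_trans W(2) by blast
      then show False using k by blast
    qed
    then have "(\<Sum>j\<in>F. component ?U F j v) = (\<Sum>j\<in>?J. component ?U F j v)"
      by (intro sum.mono_neutral_right[OF finite_F]) auto
    then have "v = (\<Sum>j\<in>?J. component ?U F j v)" using component_sum(2)[OF v_sum] by simp
    moreover have "(\<Sum>j\<in>?J. component ?U F j v) \<in> sum_space ?U ?J"
      using component_sum(1)[OF v_sum] by (intro sum_space_memI) auto
    ultimately show ?thesis by simp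
  qed
  moreover have "subspace (sum_space ?U ?J)" using sub by (intro subspace_sum_space) auto
  ultimately have "homogeneous_component S0 \<subseteq> sum_space ?U ?J"
    unfolding homogeneous_component_def by (intro span_minimal) auto
  moreover have "sum_space ?U ?J \<subseteq> homogeneous_component S0"
  proof -
    have "(\<Union>j\<in>?J. ?U j) \<subseteq> \<Union>{W. N_irreducible W \<and> N_equivalent W S0}"
      using N_irreducible_translate by blast
    then show ?thesis
      unfolding homogeneous_component_def using sum_space_eq_span[of ?J ?U] finite_F sub
      by (simp add: span_mono)
  qed
  ultimately show ?thesis by blast
qed

lemma direct_sum_translates: "\<exists>n U. (\<forall>j<n. N_irreducible (U j)) \<and> direct_sum scale U n UNIV"
proof -
  have sub: "\<forall>j\<in>F. subspace (j ` S0)" using N_irreducible_translate N_irreducible_subspace by blast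
  obtain e where e: "bij_betw e {..<card F} F"
    and ds: "direct_sum scale ((\<lambda>f. f ` S0) \<circ> e) (card F) (sum_space (\<lambda>f. f ` S0) F)"
    using direct_sum_enumerate[OF finite_F sub F_independent] by blast
  have "\<forall>j<card F. N_irreducible (((\<lambda>f. f ` S0) \<circ> e) j)"
    using N_irreducible_translate bij_betw_apply[OF e] by simp
  then show ?thesis using ds F_spanning by (intro exI[of _ "card F"] exI[of _ "(\<lambda>f. f ` S0) \<circ> e"]) simp
qed

lemma homogeneous_components_transitive:
  assumes "N_irreducible S" and "N_irreducible S'"
  shows "\<exists>g\<in>Phi. g ` homogeneous_component S = homogeneous_component S'"
proof -
  obtain k where k: "k \<in> Phi" "N_equivalent S (k ` S0)"
    "homogeneous_component S = k ` homogeneous_component S0"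
    by (rule homogeneous_component_translate[OF assms(1)])
  obtain k' where k': "k' \<in> Phi" "N_equivalent S' (k' ` S0)"
    "homogeneous_component S' = k' ` homogeneous_component S0"
    by (rule homogeneous_component_translate[OF assms(2)])
  have "(k' \<circ> inv_into UNIV k) ` homogeneous_component S = homogeneous_component S'"
    using k(3) k'(3) Phi_inv_apply[OF k(1)] by (simp add: image_comp)
  moreover have "k' \<circ> inv_into UNIV k \<in> Phi" using comp_Phi[OF k'(1) inv_Phi[OF k(1)]] .
  ultimately show ?thesis by blast
qed

lemma homogeneous_component_multiplicity:
  "\<exists>m. \<forall>S. N_irreducible S \<longrightarrow> (\<exists>U. (\<forall>j<m. N_irreducible (U j) \<and> N_equivalent (U j) S) \<and>
      direct_sum scale U m (homogeneous_component S))"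
proof -
  let ?J = "{k\<in>F. N_equivalent (k ` S0) S0}"
  have sub: "\<forall>j\<in>F. subspace (j ` S0)" using N_irreducible_translate N_irreducible_subspace by blast
  have "independent_family (\<lambda>f. f ` S0) ?J"
    by (rule independent_family_subset[OF F_independent finite_F]) (use sub subspace_0 in auto)
  then obtain e where e: "bij_betw e {..<card ?J} ?J"
    and ds: "direct_sum scale ((\<lambda>f. f ` S0) \<circ> e) (card ?J) (homogeneous_component S0)"
    using direct_sum_enumerate[of ?J "\<lambda>f. f ` S0"] finite_F sub homogeneous_component_eq_sum_translates by auto
  have e_J: "\<And>j. j < card ?J \<Longrightarrow> e j \<in> ?J" using bij_betw_apply[OF e] by simp
  have "\<exists>U. (\<forall>j<card ?J. N_irreducible (U j) \<and> N_equivalent (U j) S) \<and>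
      direct_sum scale U (card ?J) (homogeneous_component S)" if S: "N_irreducible S" for S
  proof -
    obtain k where k: "k \<in> Phi" "N_equivalent S (k ` S0)"
      and hc: "homogeneous_component S = k ` homogeneous_component S0"
      by (rule homogeneous_component_translate[OF S])
    have "direct_sum scale (\<lambda>j. k ` e j ` S0) (card ?J) (homogeneous_component S)"
      using direct_sum_linear_image[OF linear_Phi[OF k(1)] bij_is_inj[OF bij_Phi[OF k(1)]] ds] hc
      by simp
    moreover have "N_irreducible (k ` e j ` S0) \<and> N_equivalent (k ` e j ` S0) S"
      if j: "j < card ?J" for j
    proof -
      have irr: "N_irreducible (e j ` S0)" using N_irreducible_translate e_J[OF j] by blast
      have "N_equivalent (k ` e j ` S0) (k ` S0)"
        using N_equivalent_Phi_image[OF k(1) N_irreducible_invariant[OF irr]] e_J[OF j] by blast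
      then show ?thesis
        using N_irreducible_Phi_image[OF k(1) irr] N_equivalent_trans
          N_equivalent_sym[OF N_irreducible_invariant[OF S] k(2)] by blast
    qed
    ultimately show ?thesis by (intro exI[of _ "\<lambda>j. k ` e j ` S0"]) simp
  qed
  then show ?thesis by (intro exI[of _ "card ?J"]) blast
qed

lemma dim_N_irreducible: "N_irreducible S \<Longrightarrow> dim S = dim S0"
proof -
  assume S: "N_irreducible S"
  obtain k where k: "k \<in> F" "N_equivalent S (k ` S0)" using N_equivalent_translate[OF S] by blast
  have "dim (k ` S0) = dim S"
    using k(2) dim_eq_of_bij_betw[OF N_irreducible_subspace[OF S]] unfolding N_equivalent_def N_hom_def
    by blast
  moreover have "dim (k ` S0) = dim S0"
    using dim_Phi_image F_Phi k(1) N_irreducible_subspace[OF S0] by blast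
  ultimately show ?thesis by simp
qed

end

theorem clifford_theorem:
  shows "\<exists>n U. (\<forall>j<n. N_irreducible (U j)) \<and> direct_sum scale U n UNIV"
    and "N_irreducible S \<Longrightarrow> N_irreducible S' \<Longrightarrow>
      \<exists>g\<in>Phi. g ` homogeneous_component S = homogeneous_component S'"
    and "\<exists>m. \<forall>S. N_irreducible S \<longrightarrow> (\<exists>U. (\<forall>j<m. N_irreducible (U j) \<and> N_equivalent (U j) S) \<and>
      direct_sum scale U m (homogeneous_component S))"
    and "N_irreducible S \<Longrightarrow> N_irreducible S' \<Longrightarrow> dim S = dim S'"
proof -
  obtain S0 F where S0F: "N_irreducible S0" "F \<subseteq> Phi" "independent_family (\<lambda>f. f ` S0) F"
    "sum_space (\<lambda>f. f ` S0) F = UNIV"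
    using exists_N_irreducible exists_independent_translates by metis
  show "\<exists>n U. (\<forall>j<n. N_irreducible (U j)) \<and> direct_sum scale U n UNIV"
    by (rule direct_sum_translates[OF S0F])
  show "N_irreducible S \<Longrightarrow> N_irreducible S' \<Longrightarrow>
      \<exists>g\<in>Phi. g ` homogeneous_component S = homogeneous_component S'"
    by (rule homogeneous_components_transitive[OF S0F])
  show "\<exists>m. \<forall>S. N_irreducible S \<longrightarrow> (\<exists>U. (\<forall>j<m. N_irreducible (U j) \<and> N_equivalent (U j) S) \<and>
      direct_sum scale U m (homogeneous_component S))"
    by (rule homogeneous_component_multiplicity[OF S0F])
  show "N_irreducible S \<Longrightarrow> N_irreducible S' \<Longrightarrow> dim S = dim S'"
    using dim_N_irreducible[OF S0F] by simp
qed

end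

section \<open>Irreducible representations of skew braces\<close>

lemma bij_idempotent_eq_id:
  assumes "bij f" and "f \<circ> f = f"
  shows "f = id"
proof
  fix x
  have "f (f x) = f x" using fun_cong[OF assms(2), of x] by simp
  then show "f x = id x" using bij_is_inj[OF assms(1)] by (simp add: inj_eq)
qed

lemma (in normal) mult_swap:
  assumes "x \<in> carrier G" and "h \<in> H"
  shows "\<exists>h'\<in>H. h \<otimes> x = x \<otimes> h'"
proof
  show "inv x \<otimes> h \<otimes> x \<in> H" using inv_op_closed1[OF assms] .
  show "h \<otimes> x = x \<otimes> (inv x \<otimes> h \<otimes> x)"
    using assms subset by (simp add: m_assoc r_inv_ex flip: m_assoc)
qed

locale brace_irrep =
  fixes G C :: "'a monoid" and I :: "'a set"
    and scale :: "'k::field \<Rightarrow> 'v::ab_group_add \<Rightarrow> 'v"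
    and \<beta> \<rho> :: "'a \<Rightarrow> 'v \<Rightarrow> 'v"
  assumes group_G: "group G" and group_C: "group C" and carrier_C: "carrier C = carrier G"
    and finite_carrier: "finite (carrier G)"
    and vector_space: "vector_space scale"
    and ideal: "brace_ideal G C I"
    and rep: "brace_rep G C scale \<beta> \<rho>"
    and irreducible: "irred_sub scale (carrier G) \<beta> \<rho> UNIV"
begin

sublocale G: group G by (rule group_G)
sublocale C: group C by (rule group_C)

lemmas C_closed = C.m_closed[unfolded carrier_C] C.inv_closed[unfolded carrier_C]
  C.one_closed[unfolded carrier_C]

lemma linear_\<beta>: "a \<in> carrier G \<Longrightarrow> Vector_Spaces.linear scale scale (\<beta> a)"
  and bij_\<beta>: "a \<in> carrier G \<Longrightarrow> bij (\<beta> a)"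
  and linear_\<rho>: "a \<in> carrier G \<Longrightarrow> Vector_Spaces.linear scale scale (\<rho> a)"
  and bij_\<rho>: "a \<in> carrier G \<Longrightarrow> bij (\<rho> a)"
  and \<beta>_mult: "a \<in> carrier G \<Longrightarrow> b \<in> carrier G \<Longrightarrow> \<beta> (a \<otimes>\<^bsub>G\<^esub> b) = \<beta> a \<circ> \<beta> b"
  and \<rho>_mult: "a \<in> carrier G \<Longrightarrow> b \<in> carrier G \<Longrightarrow> \<rho> (a \<otimes>\<^bsub>C\<^esub> b) = \<rho> a \<circ> \<rho> b"
  and \<beta>_lambda_op: "a \<in> carrier G \<Longrightarrow> b \<in> carrier G \<Longrightarrow>
    \<beta> (brace_lambda_op G C a b) = \<rho> a \<circ> \<beta> b \<circ> inv_into UNIV (\<rho> a)"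
  using rep unfolding brace_rep_def by auto

lemma \<beta>_one: "\<beta> \<one>\<^bsub>G\<^esub> = id"
  using bij_idempotent_eq_id[OF bij_\<beta>] \<beta>_mult[of "\<one>\<^bsub>G\<^esub>" "\<one>\<^bsub>G\<^esub>"] by simp

lemma \<rho>_one: "\<rho> \<one>\<^bsub>C\<^esub> = id"
  using bij_idempotent_eq_id[OF bij_\<rho>] \<rho>_mult[of "\<one>\<^bsub>C\<^esub>" "\<one>\<^bsub>C\<^esub>"] C_closed by simp

lemma \<beta>_inv: "a \<in> carrier G \<Longrightarrow> \<beta> a \<circ> \<beta> (inv\<^bsub>G\<^esub> a) = id" "a \<in> carrier G \<Longrightarrow> \<beta> (inv\<^bsub>G\<^esub> a) \<circ> \<beta> a = id"
  using \<beta>_mult[of a "inv\<^bsub>G\<^esub> a"] \<beta>_mult[of "inv\<^bsub>G\<^esub> a" a] \<beta>_one by simp_all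

lemma \<rho>_inv: "a \<in> carrier G \<Longrightarrow> \<rho> a \<circ> \<rho> (inv\<^bsub>C\<^esub> a) = id" "a \<in> carrier G \<Longrightarrow> \<rho> (inv\<^bsub>C\<^esub> a) \<circ> \<rho> a = id"
  using \<rho>_mult[of a "inv\<^bsub>C\<^esub> a"] \<rho>_mult[of "inv\<^bsub>C\<^esub> a" a] \<rho>_one C_closed
  by (simp_all add: C.r_inv[unfolded carrier_C] C.l_inv[unfolded carrier_C])

lemma \<rho>_\<beta>_commute:
  assumes "b \<in> carrier G" and "c \<in> carrier G"
  shows "\<rho> b \<circ> \<beta> c = \<beta> (brace_lambda_op G C b c) \<circ> \<rho> b"
  using \<beta>_lambda_op[OF assms] bij_\<rho>[OF assms(1)] by (auto simp: fun_eq_iff bij_is_inj)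

lemma \<beta>_\<rho>_commute:
  assumes "d \<in> carrier G" and "e \<in> carrier G"
  shows "\<beta> e \<circ> \<rho> d = \<rho> d \<circ> \<beta> (brace_lambda_op G C (inv\<^bsub>C\<^esub> d) e)"
proof -
  have "\<rho> d \<circ> \<beta> (brace_lambda_op G C (inv\<^bsub>C\<^esub> d) e) = \<rho> d \<circ> \<rho> (inv\<^bsub>C\<^esub> d) \<circ> \<beta> e \<circ> \<rho> d"
    using \<rho>_\<beta>_commute[OF C_closed(2)[OF assms(1)] assms(2)] \<rho>_inv(2)[OF assms(1)]
    by (simp add: comp_assoc)
  then show ?thesis using \<rho>_inv(1)[OF assms(1)] by simp
qed

lemma normal_G: "I \<lhd> G" and normal_C: "I \<lhd> C"
  and lambda_in_ideal: "a \<in> carrier G \<Longrightarrow> x \<in> I \<Longrightarrow> brace_lambda G C a x \<in> I"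
  using ideal unfolding brace_ideal_def by auto

lemma ideal_subset: "I \<subseteq> carrier G"
  using normal_imp_subgroup[OF normal_G] subgroup.subset by blast

lemma lambda_op_closed: "a \<in> carrier G \<Longrightarrow> b \<in> carrier G \<Longrightarrow> brace_lambda_op G C a b \<in> carrier G"
  unfolding brace_lambda_op_def using C_closed by simp

lemma lambda_op_in_ideal:
  assumes d: "d \<in> carrier G" and e: "e \<in> I"
  shows "brace_lambda_op G C d e \<in> I"
proof -
  have eG: "e \<in> carrier G" using e ideal_subset by blast
  have "brace_lambda_op G C d e = d \<otimes>\<^bsub>G\<^esub> brace_lambda G C d e \<otimes>\<^bsub>G\<^esub> inv\<^bsub>G\<^esub> d"
    unfolding brace_lambda_op_def brace_lambda_def
    using d eG C_closed by (simp add: G.m_assoc[symmetric])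
  also have "\<dots> \<in> I" using normal.inv_op_closed2[OF normal_G d lambda_in_ideal[OF d e]] .
  finally show ?thesis .
qed

lemma inv_mult_lambda_op_in_ideal:
  assumes a: "a \<in> I" and c: "c \<in> carrier G"
  shows "inv\<^bsub>G\<^esub> c \<otimes>\<^bsub>G\<^esub> brace_lambda_op G C a c \<in> I"
proof -
  have aG: "a \<in> carrier G" using a ideal_subset by blast
  obtain j where j: "j \<in> I" and "a \<otimes>\<^bsub>C\<^esub> c = c \<otimes>\<^bsub>C\<^esub> j"
    using normal.mult_swap[OF normal_C _ a] c carrier_C by blast
  then have "inv\<^bsub>G\<^esub> c \<otimes>\<^bsub>G\<^esub> brace_lambda_op G C a c = brace_lambda G C c j \<otimes>\<^bsub>G\<^esub> inv\<^bsub>G\<^esub> a"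
    unfolding brace_lambda_op_def brace_lambda_def
    using aG c j ideal_subset C_closed by (auto simp: G.m_assoc)
  also have "\<dots> \<in> I"
    using lambda_in_ideal[OF c j] a normal_imp_subgroup[OF normal_G]
    by (simp add: subgroup.m_closed subgroup.m_inv_closed)
  finally show ?thesis .
qed

definition Lambda_ops :: "('v \<Rightarrow> 'v) set" where
  "Lambda_ops = rep_phi \<beta> \<rho> ` (carrier G \<times> carrier G)"

definition I_ops :: "('v \<Rightarrow> 'v) set" where
  "I_ops = \<beta> ` I \<union> \<rho> ` I"

lemma rep_phi_in_Lambda_ops: "g \<in> carrier G \<times> carrier G \<Longrightarrow> rep_phi \<beta> \<rho> g \<in> Lambda_ops"
  unfolding Lambda_ops_def by blast

lemma Lambda_opsE:
  assumes "f \<in> Lambda_ops"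
  obtains a b where "a \<in> carrier G" and "b \<in> carrier G" and "f = \<beta> a \<circ> \<rho> b"
  using assms unfolding Lambda_ops_def rep_phi_def by auto

lemma rep_phi_mult:
  assumes "g \<in> carrier G \<times> carrier G" and "h \<in> carrier G \<times> carrier G"
  shows "rep_phi \<beta> \<rho> g \<circ> rep_phi \<beta> \<rho> h = rep_phi \<beta> \<rho> (g \<otimes>\<^bsub>Lambda_group G C\<^esub> h)"
    and "g \<otimes>\<^bsub>Lambda_group G C\<^esub> h \<in> carrier G \<times> carrier G"
proof -
  obtain a b c d where g: "g = (a, b)" and h: "h = (c, d)" by fastforce
  have abcd: "a \<in> carrier G" "b \<in> carrier G" "c \<in> carrier G" "d \<in> carrier G"
    using assms g h by auto
  have prod: "g \<otimes>\<^bsub>Lambda_group G C\<^esub> h = (a \<otimes>\<^bsub>G\<^esub> brace_lambda_op G C b c, b \<otimes>\<^bsub>C\<^esub> d)"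
    unfolding g h Lambda_group_def by simp
  show "g \<otimes>\<^bsub>Lambda_group G C\<^esub> h \<in> carrier G \<times> carrier G"
    unfolding prod using abcd lambda_op_closed C_closed by simp
  have "\<beta> a \<circ> \<rho> b \<circ> (\<beta> c \<circ> \<rho> d) = \<beta> a \<circ> (\<rho> b \<circ> \<beta> c) \<circ> \<rho> d" by (simp add: comp_assoc)
  also have "\<dots> = \<beta> (a \<otimes>\<^bsub>G\<^esub> brace_lambda_op G C b c) \<circ> \<rho> (b \<otimes>\<^bsub>C\<^esub> d)"
    using abcd \<rho>_\<beta>_commute \<beta>_mult \<rho>_mult lambda_op_closed by (simp add: comp_assoc)
  finally show "rep_phi \<beta> \<rho> g \<circ> rep_phi \<beta> \<rho> h = rep_phi \<beta> \<rho> (g \<otimes>\<^bsub>Lambda_group G C\<^esub> h)"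
    using prod unfolding rep_phi_def g h by simp
qed

lemma Lambda_ops_inverse:
  assumes f: "f \<in> Lambda_ops"
  shows "\<exists>h\<in>Lambda_ops. h \<circ> f = id \<and> f \<circ> h = id"
proof -
  obtain a b where ab: "a \<in> carrier G" "b \<in> carrier G" and f_ab: "f = \<beta> a \<circ> \<rho> b"
    using f by (rule Lambda_opsE)
  let ?a' = "inv\<^bsub>G\<^esub> a" and ?b' = "inv\<^bsub>C\<^esub> b"
  have a'b': "?a' \<in> carrier G" "?b' \<in> carrier G" using ab C_closed by auto
  let ?h = "\<rho> ?b' \<circ> \<beta> ?a'"
  have "?h = rep_phi \<beta> \<rho> (brace_lambda_op G C ?b' ?a', ?b')"
    unfolding rep_phi_def using \<rho>_\<beta>_commute[OF a'b'(2,1)] by simp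
  then have "?h \<in> Lambda_ops" using a'b' lambda_op_closed rep_phi_in_Lambda_ops by simp
  moreover have "?h \<circ> f = id" "f \<circ> ?h = id"
    unfolding f_ab using \<beta>_inv[OF ab(1)] \<rho>_inv[OF ab(2)]
    by (simp_all add: comp_assoc) (simp_all flip: comp_assoc)
  ultimately show ?thesis by blast
qed

lemma \<beta>_ideal_conj:
  assumes a: "a \<in> I" and c: "c \<in> carrier G" and d: "d \<in> carrier G"
  shows "\<exists>e\<in>I. \<beta> a \<circ> (\<beta> c \<circ> \<rho> d) = (\<beta> c \<circ> \<rho> d) \<circ> \<beta> e"
proof -
  obtain e where e: "e \<in> I" and ac: "a \<otimes>\<^bsub>G\<^esub> c = c \<otimes>\<^bsub>G\<^esub> e"
    using normal.mult_swap[OF normal_G c a] by blast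
  have aG: "a \<in> carrier G" and eG: "e \<in> carrier G" using a e ideal_subset by auto
  have "\<beta> a \<circ> \<beta> c = \<beta> c \<circ> \<beta> e" using \<beta>_mult[OF aG c] \<beta>_mult[OF c eG] ac by simp
  then have "\<beta> a \<circ> (\<beta> c \<circ> \<rho> d) = \<beta> c \<circ> (\<beta> e \<circ> \<rho> d)" by (metis comp_assoc)
  also have "\<dots> = (\<beta> c \<circ> \<rho> d) \<circ> \<beta> (brace_lambda_op G C (inv\<^bsub>C\<^esub> d) e)"
    using \<beta>_\<rho>_commute[OF d eG] by (simp add: comp_assoc)
  finally show ?thesis using lambda_op_in_ideal[OF C_closed(2)[OF d] e] by blast
qed

lemma \<rho>_ideal_conj:
  assumes a: "a \<in> I" and c: "c \<in> carrier G" and d: "d \<in> carrier G"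
  shows "\<exists>t\<in>I. \<exists>s\<in>I. \<rho> a \<circ> (\<beta> c \<circ> \<rho> d) = (\<beta> c \<circ> \<rho> d) \<circ> \<beta> t \<circ> \<rho> s"
proof -
  have aG: "a \<in> carrier G" using a ideal_subset by blast
  define t where "t = inv\<^bsub>G\<^esub> c \<otimes>\<^bsub>G\<^esub> brace_lambda_op G C a c"
  have t: "t \<in> I" unfolding t_def by (rule inv_mult_lambda_op_in_ideal[OF a c])
  have tG: "t \<in> carrier G" using t ideal_subset by blast
  have ct: "brace_lambda_op G C a c = c \<otimes>\<^bsub>G\<^esub> t"
    unfolding t_def using c lambda_op_closed[OF aG c] by (simp flip: G.m_assoc)
  obtain s where s: "s \<in> I" and ad: "a \<otimes>\<^bsub>C\<^esub> d = d \<otimes>\<^bsub>C\<^esub> s"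
    using normal.mult_swap[OF normal_C _ a] d carrier_C by blast
  have sG: "s \<in> carrier G" using s ideal_subset by blast
  have "\<rho> a \<circ> (\<beta> c \<circ> \<rho> d) = \<beta> (brace_lambda_op G C a c) \<circ> \<rho> (a \<otimes>\<^bsub>C\<^esub> d)"
    using \<rho>_\<beta>_commute[OF aG c] \<rho>_mult[OF aG d] by (metis comp_assoc)
  also have "\<dots> = \<beta> c \<circ> (\<beta> t \<circ> \<rho> d) \<circ> \<rho> s"
    unfolding ct ad using c d tG sG \<beta>_mult \<rho>_mult by (simp add: comp_assoc)
  also have "\<dots> = (\<beta> c \<circ> \<rho> d) \<circ> \<beta> (brace_lambda_op G C (inv\<^bsub>C\<^esub> d) t) \<circ> \<rho> s"
    using \<beta>_\<rho>_commute[OF d tG] by (simp add: comp_assoc)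
  finally show ?thesis using lambda_op_in_ideal[OF C_closed(2)[OF d] t] s by blast
qed

lemma I_ops_normalized:
  assumes f: "f \<in> Lambda_ops" and x: "x \<in> I_ops"
  shows "\<exists>y\<in>I_ops. \<exists>z\<in>I_ops. x \<circ> f = f \<circ> y \<circ> z"
proof -
  obtain c d where cd: "c \<in> carrier G" "d \<in> carrier G" and f_cd: "f = \<beta> c \<circ> \<rho> d"
    using f by (rule Lambda_opsE)
  have id_I_ops: "id \<in> I_ops"
    unfolding I_ops_def using \<beta>_one normal_imp_subgroup[OF normal_G] subgroup.one_closed by force
  consider (\<beta>) a where "a \<in> I" "x = \<beta> a" | (\<rho>) a where "a \<in> I" "x = \<rho> a"
    using x unfolding I_ops_def by blast
  then show ?thesis
  proof cases
    case \<beta>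
    obtain e where e: "e \<in> I" "\<beta> a \<circ> (\<beta> c \<circ> \<rho> d) = (\<beta> c \<circ> \<rho> d) \<circ> \<beta> e"
      using \<beta>_ideal_conj[OF \<beta>(1) cd] by blast
    then have "x \<circ> f = f \<circ> \<beta> e \<circ> id" using \<beta>(2) f_cd by simp
    then show ?thesis using e(1) id_I_ops unfolding I_ops_def by blast
  next
    case \<rho>
    then show ?thesis using \<rho>_ideal_conj[OF \<rho>(1) cd] unfolding f_cd I_ops_def by blast
  qed
qed

lemma \<beta>_rep_phi: "a \<in> carrier G \<Longrightarrow> \<beta> a = rep_phi \<beta> \<rho> (a, \<one>\<^bsub>C\<^esub>)"
  and \<rho>_rep_phi: "a \<in> carrier G \<Longrightarrow> \<rho> a = rep_phi \<beta> \<rho> (\<one>\<^bsub>G\<^esub>, a)"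
  unfolding rep_phi_def using \<beta>_one \<rho>_one by simp_all

sublocale action: irreducible_action scale Lambda_ops
proof (rule irreducible_action.intro[OF vector_space], rule irreducible_action_axioms.intro)
  show "Vector_Spaces.linear scale scale f" if "f \<in> Lambda_ops" for f
    using that linear_\<beta> linear_\<rho> Vector_Spaces.linear_compose by (metis Lambda_opsE)
  show "finite Lambda_ops" unfolding Lambda_ops_def using finite_carrier by simp
  show "id \<in> Lambda_ops" using rep_phi_in_Lambda_ops[of "(\<one>\<^bsub>G\<^esub>, \<one>\<^bsub>C\<^esub>)"] C_closed
    by (simp add: rep_phi_def \<beta>_one \<rho>_one)
  show "f \<circ> g \<in> Lambda_ops" if "f \<in> Lambda_ops" "g \<in> Lambda_ops" for f g
    using that rep_phi_mult rep_phi_in_Lambda_ops unfolding Lambda_ops_def by auto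
  show "\<exists>h\<in>Lambda_ops. h \<circ> f = id \<and> f \<circ> h = id" if "f \<in> Lambda_ops" for f
    using Lambda_ops_inverse[OF that] .
  show "W = {0} \<or> W = UNIV" if "module.subspace scale W" "\<forall>f\<in>Lambda_ops. f ` W \<subseteq> W" for W
  proof -
    have "inv_subspace scale (carrier G) \<beta> \<rho> W"
      unfolding inv_subspace_def using that \<beta>_rep_phi \<rho>_rep_phi C_closed rep_phi_in_Lambda_ops
      by auto
    then show ?thesis using irreducible unfolding irred_sub_def by blast
  qed
  show "UNIV \<noteq> {0::'v}" using irreducible unfolding irred_sub_def by blast
qed

definition basis :: "'v set" where
  "basis = (SOME B. finite B \<and> action.independent B \<and> action.span B = UNIV)"

sublocale CL: clifford scale Lambda_ops basis I_ops
proof (rule clifford.intro)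
  show "irreducible_action scale Lambda_ops" ..
  have "\<exists>B. finite B \<and> action.independent B \<and> action.span B = UNIV"
    using action.finite_basis by metis
  then show "finite_dimensional_vector_space scale basis"
    unfolding basis_def finite_dimensional_vector_space_def finite_dimensional_vector_space_axioms_def
    using vector_space by (metis (mono_tags, lifting) someI_ex)
  show "clifford_axioms scale Lambda_ops I_ops"
  proof (rule clifford_axioms.intro)
    fix x assume "x \<in> I_ops"
    then show "Vector_Spaces.linear scale scale x"
      using linear_\<beta> linear_\<rho> ideal_subset unfolding I_ops_def by blast
  next
    fix f x assume "f \<in> Lambda_ops" "x \<in> I_ops"
    then show "\<exists>y\<in>I_ops. \<exists>z\<in>I_ops. x \<circ> f = f \<circ> y \<circ> z" by (rule I_ops_normalized)
  qed
qed

lemma N_invariant_eq: "CL.N_invariant = inv_subspace scale I \<beta> \<rho>"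
  unfolding fun_eq_iff CL.N_invariant_def inv_subspace_def by (auto simp: I_ops_def)

lemma N_irreducible_eq: "CL.N_irreducible = irred_sub scale I \<beta> \<rho>"
  unfolding CL.N_irreducible_def[abs_def] irred_sub_def[abs_def] N_invariant_eq ..

lemma N_equivalent_eq: "CL.N_equivalent = equiv_sub scale I \<beta> \<rho>"
proof -
  have "(\<forall>x\<in>I_ops. \<forall>w\<in>W. T (x w) = x (T w)) \<longleftrightarrow>
      (\<forall>a\<in>I. \<forall>w\<in>W. T (\<beta> a w) = \<beta> a (T w) \<and> T (\<rho> a w) = \<rho> a (T w))" for T W
    unfolding I_ops_def by auto
  then show ?thesis
    unfolding fun_eq_iff CL.N_equivalent_def CL.N_hom_def equiv_sub_def linear_on_def
    by (simp add: conj_ac)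
qed

lemma homogeneous_component_eq: "CL.homogeneous_component = homog_comp scale I \<beta> \<rho>"
  unfolding CL.homogeneous_component_def[abs_def] homog_comp_def[abs_def]
    N_irreducible_eq N_equivalent_eq ..

lemma restriction_completely_reducible: "completely_reducible scale I \<beta> \<rho>"
  using CL.clifford_theorem(1) unfolding completely_reducible_def N_irreducible_eq .

lemma homog_comp_image:
  assumes "g \<in> carrier G \<times> carrier G" and "irred_sub scale I \<beta> \<rho> S"
  shows "irred_sub scale I \<beta> \<rho> (rep_phi \<beta> \<rho> g ` S)"
    and "rep_phi \<beta> \<rho> g ` homog_comp scale I \<beta> \<rho> S = homog_comp scale I \<beta> \<rho> (rep_phi \<beta> \<rho> g ` S)"
proof -
  have g: "rep_phi \<beta> \<rho> g \<in> Lambda_ops" using rep_phi_in_Lambda_ops[OF assms(1)] .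
  have S: "CL.N_irreducible S" using assms(2) unfolding N_irreducible_eq .
  show "irred_sub scale I \<beta> \<rho> (rep_phi \<beta> \<rho> g ` S)"
    using CL.N_irreducible_Phi_image[OF g S] unfolding N_irreducible_eq .
  show "rep_phi \<beta> \<rho> g ` homog_comp scale I \<beta> \<rho> S = homog_comp scale I \<beta> \<rho> (rep_phi \<beta> \<rho> g ` S)"
    using CL.homogeneous_component_Phi_image[OF g S] unfolding homogeneous_component_eq .
qed

lemma homog_comp_transitive:
  assumes "irred_sub scale I \<beta> \<rho> S" and "irred_sub scale I \<beta> \<rho> S'"
  shows "\<exists>g\<in>carrier G \<times> carrier G. rep_phi \<beta> \<rho> g ` homog_comp scale I \<beta> \<rho> S = homog_comp scale I \<beta> \<rho> S'"
  using CL.clifford_theorem(2) assms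
  unfolding N_irreducible_eq homogeneous_component_eq Lambda_ops_def by blast

lemma homog_comp_multiplicity:
  "\<exists>m. \<forall>S. irred_sub scale I \<beta> \<rho> S \<longrightarrow>
     (\<exists>U. (\<forall>j<m. irred_sub scale I \<beta> \<rho> (U j) \<and> equiv_sub scale I \<beta> \<rho> (U j) S) \<and>
          direct_sum scale U m (homog_comp scale I \<beta> \<rho> S))"
  using CL.clifford_theorem(3) unfolding N_irreducible_eq N_equivalent_eq homogeneous_component_eq .

lemma dim_irred_sub:
  "irred_sub scale I \<beta> \<rho> S \<Longrightarrow> irred_sub scale I \<beta> \<rho> S' \<Longrightarrow> vector_space.dim scale S = vector_space.dim scale S'"
  using CL.clifford_theorem(4) unfolding N_irreducible_eq .

end

theorem theorem3p4:
  fixes G C :: "'a monoid" and I :: "'a set"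
    and scale :: "'k::field \<Rightarrow> 'v::ab_group_add \<Rightarrow> 'v"
    and \<beta> \<rho> :: "'a \<Rightarrow> 'v \<Rightarrow> 'v"
  assumes "skew_brace G C" and "finite (carrier G)"
    and "vector_space scale"
    and "brace_ideal G C I"
    and "brace_rep G C scale \<beta> \<rho>"
    and "irred_sub scale (carrier G) \<beta> \<rho> UNIV"
  shows "completely_reducible scale I \<beta> \<rho>
    \<and> (\<forall>g\<in>carrier G \<times> carrier G. \<forall>S. irred_sub scale I \<beta> \<rho> S \<longrightarrow>
         (\<exists>S'. irred_sub scale I \<beta> \<rho> S' \<and>
               rep_phi \<beta> \<rho> g ` homog_comp scale I \<beta> \<rho> S = homog_comp scale I \<beta> \<rho> S'))
    \<and> (\<forall>S S'. irred_sub scale I \<beta> \<rho> S \<and> irred_sub scale I \<beta> \<rho> S' \<longrightarrow>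
         (\<exists>g\<in>carrier G \<times> carrier G.
               rep_phi \<beta> \<rho> g ` homog_comp scale I \<beta> \<rho> S = homog_comp scale I \<beta> \<rho> S'))
    \<and> (\<exists>m. \<forall>S. irred_sub scale I \<beta> \<rho> S \<longrightarrow>
         (\<exists>U. (\<forall>j<m. irred_sub scale I \<beta> \<rho> (U j) \<and> equiv_sub scale I \<beta> \<rho> (U j) S) \<and>
              direct_sum scale U m (homog_comp scale I \<beta> \<rho> S)))
    \<and> (\<forall>S S'. irred_sub scale I \<beta> \<rho> S \<and> irred_sub scale I \<beta> \<rho> S' \<longrightarrow>
         vector_space.dim scale S = vector_space.dim scale S')"
proof -
  interpret brace_irrep G C I scale \<beta> \<rho>
    by (rule brace_irrep.intro) (use assms in \<open>auto simp: skew_brace_def\<close>)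
  show ?thesis
  proof (intro conjI restriction_completely_reducible homog_comp_multiplicity allI ballI impI)
    show "\<exists>S'. irred_sub scale I \<beta> \<rho> S' \<and>
        rep_phi \<beta> \<rho> g ` homog_comp scale I \<beta> \<rho> S = homog_comp scale I \<beta> \<rho> S'"
      if "g \<in> carrier G \<times> carrier G" and "irred_sub scale I \<beta> \<rho> S" for g S
      using homog_comp_image[OF that] by blast
  qed (use homog_comp_transitive dim_irred_sub in blast)+
qed

end
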